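(* Let $q=(x,y)$ be a solution of the planar Stark problem $\ddot x=-x/r^3+1$, $\ddot y=-y/r^3$ ($r=\sqrt{x^2+y^2}$) with energy $H$ and constant $c$, and let $(\xi(\tau),\eta(\tau))$ be its regularized parabolic coordinates. If $\xi$ and $\eta$ are both periodic functions of $\tau$, with minimal positive periods $T_\xi$ and $T_\eta$ respectively, then $T_\xi>T_\eta$.
   Context: Energy: $H=\frac12(\dot x^2+\dot y^2)-\frac1r-x$. The constant $c$ is the conserved quantity $c=-\dot y(x\dot y-y\dot x)+\frac{x}{r}-\frac12y^2$. Regularized parabolic coordinates: $\xi^2=r+x$, $\eta^2=r-x$, with new time $\tau$ defined by $dt=(\xi^2+\eta^2)\,d\tau$; writing $'=d/d\tau$, they satisfy $\xi'^2=\xi^4+2H\xi^2+2(c+1)$ and $\eta'^2=-\eta^4+2H\eta^2-2(c-1)$, i.e. $\xi''=2\xi^3+2H\xi$, $\eta''=-2\eta^3+2H\eta$. *)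

theory Defs
  imports "HOL-Analysis.Analysis"
begin

definition stark_energy :: "real \<Rightarrow> real \<Rightarrow> real \<Rightarrow> real \<Rightarrow> real" where
  "stark_energy x y vx vy = (vx^2 + vy^2) / 2 - 1 / sqrt (x^2 + y^2) - x"

definition stark_const :: "real \<Rightarrow> real \<Rightarrow> real \<Rightarrow> real \<Rightarrow> real" where
  "stark_const x y vx vy = - vy * (x * vy - y * vx) + x / sqrt (x^2 + y^2) - y^2 / 2"

definition periodic_with :: "(real \<Rightarrow> real) \<Rightarrow> real \<Rightarrow> bool" where
  "periodic_with f T \<longleftrightarrow> T > 0 \<and> (\<forall>s. f (s + T) = f s)"

definition minimal_period :: "(real \<Rightarrow> real) \<Rightarrow> real \<Rightarrow> bool" where
  "minimal_period f T \<longleftrightarrow> periodic_with f T \<and> (\<forall>T'. 0 < T' \<and> T' < T \<longrightarrow> \<not> periodic_with f T')"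

end

theory Submission
  imports Defs
begin

(* Both coordinates solve a Duffing equation u'' = a u^3 + b u with b = 2H, a = 2 for \<xi> and
   a = -2 for \<eta>. Compare each with the harmonic oscillator of frequency \<omega> = sqrt (-2H) through
   the Pruefer angle \<phi> of the phase point (\<omega> u, u'), whose angular velocity is
   \<omega> - a \<omega> u^4 / ((\<omega> u)^2 + u'^2).
   For \<xi> the periodic orbit must stay in the well \<xi>^2 < -H between the two nonzero equilibria,
   which forces H < 0 and 0 < \<phi>' \<le> \<omega>; over one period \<phi> turns by a positive multiple of 2\<pi>,
   so T\<^sub>\<xi> \<ge> 2\<pi>/\<omega>. For \<eta> we have \<phi>' \<ge> \<omega>, strictly where \<eta> \<noteq> 0, so \<phi> completes a full turn
   at some time P < 2\<pi>/\<omega>; energy conservation then returns the state to its initial value, and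
   uniqueness of solutions makes P a period of \<eta>. Hence T\<^sub>\<eta> \<le> P < 2\<pi>/\<omega> \<le> T\<^sub>\<xi>. *)

section \<open>Periodic functions\<close>

lemma periodic_with_int_shift:
  assumes "periodic_with f T"
  shows "f (s + of_int k * T) = f s"
proof -
  have nat_shift: "f (s + real n * T) = f s" for n s
  proof (induction n arbitrary: s)
    case (Suc n)
    have "f (s + real (Suc n) * T) = f ((s + real n * T) + T)"
      by (simp add: algebra_simps)
    with assms Suc show ?case
      by (simp add: periodic_with_def)
  qed simp
  show ?thesis
  proof (cases "k \<ge> 0")
    case True
    then show ?thesis using nat_shift[of s "nat k"] by simp
  next
    case False
    then show ?thesis using nat_shift[of "s + of_int k * T" "nat (- k)"] by simp
  qed
qed

lemma periodic_with_range:
  assumes "periodic_with f T"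
  shows "range f = f ` {0..T}"
proof -
  have "f s \<in> f ` {0..T}" for s
  proof -
    have T: "T > 0" using assms by (simp add: periodic_with_def)
    define k where "k = \<lfloor>s / T\<rfloor>"
    have "of_int k \<le> s / T" "s / T < of_int k + 1"
      unfolding k_def by linarith+
    then have "of_int k * T \<le> s" "s < (of_int k + 1) * T"
      using T by (auto simp: field_simps)
    then have "s - of_int k * T \<in> {0..T}" by (auto simp: algebra_simps)
    moreover have "f s = f (s - of_int k * T)"
      using periodic_with_int_shift[OF assms, of "s - of_int k * T" k] by simp
    ultimately show ?thesis by blast
  qed
  then show ?thesis by blast
qed

lemma periodic_continuous_compact_range:
  assumes "periodic_with f T" "\<And>x. isCont f x"
  shows "compact (range f)"
  unfolding periodic_with_range[OF assms(1)]
  using assms(2) by (intro compact_continuous_image continuous_at_imp_continuous_on) auto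

lemma periodic_with_deriv:
  assumes "periodic_with f T" "\<And>t. (f has_real_derivative f' t) (at t)"
  shows "periodic_with f' T"
  unfolding periodic_with_def
proof (intro conjI allI)
  show "T > 0" using assms(1) by (simp add: periodic_with_def)
  fix s
  have "(\<lambda>x. f (x + T)) = f" using assms(1) by (simp add: periodic_with_def)
  then have "(f has_real_derivative f' (s + T)) (at s)"
    using assms(2)[of "s + T"] DERIV_shift[of f "f' (s + T)" s T] by simp
  then show "f' (s + T) = f' s" using assms(2) by (rule DERIV_unique)
qed

lemma minimal_period_nonconstant:
  assumes "minimal_period f T"
  shows "\<exists>s t. f s \<noteq> f t"
proof (rule ccontr)
  assume "\<not> (\<exists>s t. f s \<noteq> f t)"
  then have "periodic_with f (T / 2)"
    using assms by (simp add: periodic_with_def minimal_period_def)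
  moreover have "0 < T / 2" "T / 2 < T"
    using assms by (auto simp: periodic_with_def minimal_period_def)
  ultimately show False using assms by (auto simp: minimal_period_def)
qed

lemma continuous_has_real_antiderivative:
  fixes f :: "real \<Rightarrow> real"
  assumes "\<And>x. isCont f x"
  obtains F where "\<And>x. (F has_real_derivative f x) (at x)"
proof -
  have "\<exists>F. \<forall>x :: real. (-\<infinity>::ereal) < x \<longrightarrow> x < \<infinity> \<longrightarrow> (F has_vector_derivative f x) (at x)"
    by (rule einterval_antiderivative) (auto simp: assms)
  then show ?thesis
    using that by (auto simp: has_real_derivative_iff_has_vector_derivative)
qed

lemma DERIV_second_nonpos_at_max:
  fixes f :: "real \<Rightarrow> real"
  assumes f': "\<And>t. (f has_real_derivative f' t) (at t)"
    and f'': "(f' has_real_derivative a) (at t)"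
    and max: "\<And>s. f s \<le> f t"
  shows "f' t = 0" and "a \<le> 0"
proof -
  show crit: "f' t = 0"
    using max by (intro DERIV_local_max[OF f', of 1]) auto
  show "a \<le> 0"
  proof (rule ccontr)
    assume "\<not> a \<le> 0"
    then obtain e where e: "e > 0" "\<And>h. 0 < h \<Longrightarrow> h < e \<Longrightarrow> f' t < f' (t + h)"
      using DERIV_pos_inc_right[OF f''] by auto
    obtain z where z: "t < z" "z < t + e" "f (t + e / 2) - f t = (e / 2) * f' z"
      using MVT2[of t "t + e / 2" f f'] f' e(1) by auto
    have "f' z > 0" using e(2)[of "z - t"] z crit by auto
    then have "(e / 2) * f' z > 0" using e(1) by simp
    then have "f (t + e / 2) > f t" using z(3) by linarith
    with max show False by (meson not_le)
  qed
qed

lemma DERIV_second_nonneg_at_min: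
  fixes f :: "real \<Rightarrow> real"
  assumes f': "\<And>t. (f has_real_derivative f' t) (at t)"
    and f'': "(f' has_real_derivative a) (at t)"
    and min: "\<And>s. f t \<le> f s"
  shows "f' t = 0" and "a \<ge> 0"
proof -
  have "((\<lambda>s. - f s) has_real_derivative - f' s) (at s)" for s
    using f' by (rule DERIV_minus)
  moreover have "((\<lambda>s. - f' s) has_real_derivative - a) (at t)"
    using f'' by (rule DERIV_minus)
  moreover have "- f s \<le> - f t" for s
    using min by simp
  ultimately have "- f' t = 0" "- a \<le> 0"
    by (rule DERIV_second_nonpos_at_max)+
  then show "f' t = 0" "a \<ge> 0" by auto
qed

lemma DERIV_nonneg_pos_at_imp_less:
  fixes f :: "real \<Rightarrow> real"
  assumes f': "\<And>t. (f has_real_derivative f' t) (at t)"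
    and nonneg: "\<And>t. f' t \<ge> 0" and pos: "f' a > 0" and "a < b"
  shows "f a < f b"
proof -
  obtain d where d: "d > 0" "\<And>h. 0 < h \<Longrightarrow> h < d \<Longrightarrow> f a < f (a + h)"
    using DERIV_pos_inc_right[OF f' pos] by auto
  define h where "h = min (d / 2) (b - a)"
  have h: "0 < h" "h < d" "a + h \<le> b" using d(1) \<open>a < b\<close> by (auto simp: h_def)
  have "f a < f (a + h)" using d(2) h by simp
  also have "\<dots> \<le> f b"
    using h(3) f' nonneg by (metis DERIV_nonneg_imp_nondecreasing)
  finally show ?thesis .
qed

lemma reaches_level_before_linear_time:
  fixes \<theta> \<theta>' :: "real \<Rightarrow> real"
  assumes \<theta>': "\<And>t. (\<theta> has_real_derivative \<theta>' t) (at t)"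
    and ge: "\<And>t. \<omega> \<le> \<theta>' t" and gt: "\<omega> < \<theta>' t0"
    and "0 < \<omega>" "0 < c"
  obtains p where "t0 < p" "p < t0 + c / \<omega>" "\<theta> p = \<theta> t0 + c"
proof -
  have "(\<lambda>t. \<theta> t - \<omega> * t) t0 < (\<lambda>t. \<theta> t - \<omega> * t) (t0 + c / \<omega>)"
  proof (rule DERIV_nonneg_pos_at_imp_less[where f = "\<lambda>t. \<theta> t - \<omega> * t" and f' = "\<lambda>t. \<theta>' t - \<omega>"])
    show "((\<lambda>t. \<theta> t - \<omega> * t) has_real_derivative \<theta>' t - \<omega>) (at t)" for t
      by (auto intro!: derivative_eq_intros \<theta>')
  qed (use ge gt assms(4,5) in auto)
  then have beyond: "\<theta> t0 + c < \<theta> (t0 + c / \<omega>)"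
    using \<open>0 < \<omega>\<close> by (simp add: algebra_simps)
  have "continuous_on {t0 .. t0 + c / \<omega>} \<theta>"
    using \<theta>' by (meson DERIV_isCont continuous_at_imp_continuous_on)
  then obtain p where p: "t0 \<le> p" "p \<le> t0 + c / \<omega>" "\<theta> p = \<theta> t0 + c"
    using IVT'[of \<theta> t0 "\<theta> t0 + c" "t0 + c / \<omega>"] beyond \<open>0 < c\<close> \<open>0 < \<omega>\<close> by auto
  moreover have "p \<noteq> t0" "p \<noteq> t0 + c / \<omega>"
    using p(3) beyond \<open>0 < c\<close> by auto
  ultimately show ?thesis
    by (intro that) auto
qed

lemma sin_cos_eq_less_imp_ge_2pi:
  assumes "sin x = sin y" "cos x = cos y" "y < x"
  shows "y + 2 * pi \<le> x"
proof -
  obtain n :: int where n: "x = y + 2 * pi * n"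
    using sin_cos_eq_iff assms(1,2) by blast
  then have "n > 0"
    using assms(3) by (simp add: zero_less_mult_iff)
  then show ?thesis
    using n by simp
qed

lemma power2_add_power4_inj:
  fixes c x y :: real
  assumes "0 \<le> c" "0 \<le> x" "0 \<le> y" "x\<^sup>2 + c * x ^ 4 = y\<^sup>2 + c * y ^ 4"
  shows "x = y"
proof -
  have less: "x\<^sup>2 + c * x ^ 4 < y\<^sup>2 + c * y ^ 4" if "0 \<le> x" "x < y" for x y :: real
  proof -
    have "x\<^sup>2 < y\<^sup>2" "x ^ 4 \<le> y ^ 4"
      using that by (auto intro: power_strict_mono power_mono)
    then show ?thesis
      using \<open>0 \<le> c\<close> mult_left_mono by fastforce
  qed
  show ?thesis
    using less[of x y] less[of y x] assms by (cases x y rule: linorder_cases) auto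
qed

lemma cubic_extrema_signs:
  fixes a b m M :: real
  assumes "0 < a" "m < M" and max: "a * M ^ 3 + b * M < 0" and min: "0 < a * m ^ 3 + b * m"
  shows "0 < M" "m < 0" "a * M\<^sup>2 < - b" "a * m\<^sup>2 < - b"
proof -
  have fM: "M * (a * M\<^sup>2 + b) < 0" and fm: "0 < m * (a * m\<^sup>2 + b)"
    using max min by (simp_all add: power2_eq_square power3_eq_cube algebra_simps)
  show "0 < M"
  proof (rule ccontr)
    assume "\<not> 0 < M"
    then have "M < 0" "0 < a * M\<^sup>2 + b"
      using fM by (auto simp: mult_less_0_iff)
    moreover have "(- M)\<^sup>2 < (- m)\<^sup>2"
      using \<open>m < M\<close> \<open>M < 0\<close> by (intro power_strict_mono) auto
    ultimately have "m < 0" "0 < a * m\<^sup>2 + b"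
      using \<open>m < M\<close> \<open>0 < a\<close> by (auto intro: add_strict_right_mono order.strict_trans mult_strict_left_mono)
    then show False
      using fm by (simp add: zero_less_mult_iff)
  qed
  then show bM: "a * M\<^sup>2 < - b"
    using fM by (simp add: mult_less_0_iff)
  show "m < 0"
  proof (rule ccontr)
    assume "\<not> m < 0"
    then have "0 < m" "0 < a * m\<^sup>2 + b"
      using fm by (auto simp: zero_less_mult_iff)
    moreover have "a * m\<^sup>2 < a * M\<^sup>2"
      using \<open>0 < m\<close> \<open>m < M\<close> \<open>0 < a\<close> by (simp add: power_strict_mono)
    ultimately show False
      using bM by linarith
  qed
  then show "a * m\<^sup>2 < - b"
    using fm by (simp add: zero_less_mult_iff)
qed

section \<open>Uniqueness for second-order autonomous equations\<close>

lemma DERIV_abs_le_imp_vanishing: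
  fixes E E' :: "real \<Rightarrow> real"
  assumes E': "\<And>t. (E has_real_derivative E' t) (at t)"
    and nonneg: "\<And>t. 0 \<le> E t" and bound: "\<And>t. \<bar>E' t\<bar> \<le> C * E t"
    and zero: "E t0 = 0"
  shows "E t = 0"
proof (cases "t0 \<le> t")
  case True
  have "E t * exp (- C * t) \<le> E t0 * exp (- C * t0)"
  proof (rule DERIV_nonpos_imp_nonincreasing[of t0 t "\<lambda>s. E s * exp (- C * s)", OF True])
    fix s
    have "((\<lambda>s. E s * exp (- C * s)) has_real_derivative (E' s - C * E s) * exp (- C * s)) (at s)"
      by (auto intro!: derivative_eq_intros E' simp: algebra_simps)
    moreover have "(E' s - C * E s) * exp (- C * s) \<le> 0"
      using bound[of s] by (intro mult_nonpos_nonneg) auto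
    ultimately show "\<exists>y. ((\<lambda>s. E s * exp (- C * s)) has_real_derivative y) (at s) \<and> y \<le> 0"
      by blast
  qed
  with zero nonneg[of t] show ?thesis by (simp add: mult_le_0_iff)
next
  case False
  have "E t * exp (C * t) \<le> E t0 * exp (C * t0)"
  proof (rule DERIV_nonneg_imp_nondecreasing[of t t0 "\<lambda>s. E s * exp (C * s)"])
    show "t \<le> t0" using False by simp
    fix s
    have "((\<lambda>s. E s * exp (C * s)) has_real_derivative (E' s + C * E s) * exp (C * s)) (at s)"
      by (auto intro!: derivative_eq_intros E' simp: algebra_simps)
    moreover have "(E' s + C * E s) * exp (C * s) \<ge> 0"
      using bound[of s] by (intro mult_nonneg_nonneg) auto
    ultimately show "\<exists>y. ((\<lambda>s. E s * exp (C * s)) has_real_derivative y) (at s) \<and> y \<ge> 0"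
      by blast
  qed
  with zero nonneg[of t] show ?thesis by (simp add: mult_le_0_iff)
qed

lemma second_order_ode_unique:
  fixes u du v dv g :: "real \<Rightarrow> real"
  assumes lip: "L-lipschitz_on S g"
    and u': "\<And>t. (u has_real_derivative du t) (at t)"
    and u'': "\<And>t. (du has_real_derivative g (u t)) (at t)"
    and v': "\<And>t. (v has_real_derivative dv t) (at t)"
    and v'': "\<And>t. (dv has_real_derivative g (v t)) (at t)"
    and ranges: "range u \<subseteq> S" "range v \<subseteq> S"
    and init: "u t0 = v t0" "du t0 = dv t0"
  shows "u t = v t"
proof -
  define E where "E s = (u s - v s)\<^sup>2 + (du s - dv s)\<^sup>2" for s
  define E' where "E' s = 2 * (u s - v s) * (du s - dv s) + 2 * (du s - dv s) * (g (u s) - g (v s))" for s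
  have "(E has_real_derivative E' s) (at s)" for s
    unfolding E_def E'_def by (auto intro!: derivative_eq_intros u' u'' v' v'' simp: algebra_simps)
  moreover have "0 \<le> E s" for s
    by (simp add: E_def)
  moreover have "\<bar>E' s\<bar> \<le> (1 + L) * E s" for s
  proof -
    define p q where "p = u s - v s" and "q = du s - dv s"
    have L: "L \<ge> 0" "\<bar>g (u s) - g (v s)\<bar> \<le> L * \<bar>p\<bar>"
      using lipschitz_on_nonneg[OF lip] lipschitz_onD[OF lip, of "u s" "v s"] ranges
      by (auto simp: p_def dist_real_def)
    have amgm: "2 * \<bar>p\<bar> * \<bar>q\<bar> \<le> p\<^sup>2 + q\<^sup>2"
      using sum_squares_bound[of "\<bar>p\<bar>" "\<bar>q\<bar>"] by simp
    have "E' s = 2 * p * q + 2 * q * (g (u s) - g (v s))"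
      by (simp add: E'_def p_def q_def)
    then have "\<bar>E' s\<bar> \<le> \<bar>2 * p * q\<bar> + \<bar>2 * q * (g (u s) - g (v s))\<bar>"
      by (simp only: abs_triangle_ineq)
    also have "\<dots> = 2 * \<bar>p\<bar> * \<bar>q\<bar> + 2 * \<bar>q\<bar> * \<bar>g (u s) - g (v s)\<bar>"
      by (simp add: abs_mult)
    also have "\<dots> \<le> 2 * \<bar>p\<bar> * \<bar>q\<bar> + 2 * \<bar>q\<bar> * (L * \<bar>p\<bar>)"
      using L(2) by (simp add: mult_left_mono)
    also have "\<dots> = (1 + L) * (2 * \<bar>p\<bar> * \<bar>q\<bar>)"
      by (simp add: algebra_simps)
    also have "\<dots> \<le> (1 + L) * E s"
      using amgm L by (simp add: E_def p_def q_def)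
    finally show ?thesis .
  qed
  moreover have "E t0 = 0"
    using init by (simp add: E_def)
  ultimately have "E t = 0"
    by (rule DERIV_abs_le_imp_vanishing)
  then show ?thesis
    unfolding E_def by (simp add: add_nonneg_eq_0_iff)
qed

lemma cubic_lipschitz_on:
  fixes a b B :: real
  assumes "0 \<le> B"
  shows "(3 * \<bar>a\<bar> * B\<^sup>2 + \<bar>b\<bar>)-lipschitz_on {-B..B} (\<lambda>x. a * x ^ 3 + b * x)"
proof (rule lipschitz_onI)
  fix x y :: real
  assume "x \<in> {-B..B}" "y \<in> {-B..B}"
  then have "\<bar>x\<bar> \<le> B" "\<bar>y\<bar> \<le> B" by auto
  have "\<bar>x\<^sup>2 + x * y + y\<^sup>2\<bar> \<le> \<bar>x\<bar>\<^sup>2 + \<bar>x\<bar> * \<bar>y\<bar> + \<bar>y\<bar>\<^sup>2"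
    using abs_triangle_ineq[of "x\<^sup>2 + x * y" "y\<^sup>2"] abs_triangle_ineq[of "x\<^sup>2" "x * y"]
    by (simp add: abs_mult)
  also have "\<dots> \<le> B\<^sup>2 + B * B + B\<^sup>2"
    using \<open>\<bar>x\<bar> \<le> B\<close> \<open>\<bar>y\<bar> \<le> B\<close> by (intro add_mono mult_mono power_mono) auto
  finally have quad: "\<bar>x\<^sup>2 + x * y + y\<^sup>2\<bar> \<le> 3 * B\<^sup>2"
    by (simp add: power2_eq_square)
  have "a * x ^ 3 + b * x - (a * y ^ 3 + b * y) = (x - y) * (a * (x\<^sup>2 + x * y + y\<^sup>2) + b)"
    by (simp add: power2_eq_square power3_eq_cube algebra_simps)
  then have "dist (a * x ^ 3 + b * x) (a * y ^ 3 + b * y)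
      = \<bar>a * (x\<^sup>2 + x * y + y\<^sup>2) + b\<bar> * dist x y"
    by (simp add: dist_real_def abs_mult)
  also have "\<dots> \<le> (3 * \<bar>a\<bar> * B\<^sup>2 + \<bar>b\<bar>) * dist x y"
  proof (rule mult_right_mono)
    have "\<bar>a * (x\<^sup>2 + x * y + y\<^sup>2)\<bar> \<le> \<bar>a\<bar> * (3 * B\<^sup>2)"
      using quad by (simp add: abs_mult mult_left_mono)
    then show "\<bar>a * (x\<^sup>2 + x * y + y\<^sup>2) + b\<bar> \<le> 3 * \<bar>a\<bar> * B\<^sup>2 + \<bar>b\<bar>" by linarith
  qed simp
  finally show "dist (a * x ^ 3 + b * x) (a * y ^ 3 + b * y) \<le> (3 * \<bar>a\<bar> * B\<^sup>2 + \<bar>b\<bar>) * dist x y" .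
qed simp

section \<open>Pruefer transformation\<close>

lemma DERIV_div_sqrt_constant:
  fixes g N :: "real \<Rightarrow> real"
  assumes g': "\<And>t. (g has_real_derivative g' t) (at t)"
    and N': "\<And>t. (N has_real_derivative N' t) (at t)"
    and pos: "\<And>t. N t > 0"
    and rel: "\<And>t. 2 * N t * g' t = N' t * g t"
  shows "g t / sqrt (N t) = g s / sqrt (N s)"
proof -
  have "((\<lambda>t. g t / sqrt (N t)) has_real_derivative 0) (at t)" for t
  proof -
    have "((\<lambda>t. g t / sqrt (N t)) has_real_derivative
        (g' t * sqrt (N t) - g t * (inverse (sqrt (N t)) / 2 * N' t)) / (sqrt (N t) * sqrt (N t))) (at t)"
      using pos[of t] by (intro DERIV_divide DERIV_chain2[OF DERIV_real_sqrt] g' N') auto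
    moreover have "g' t * sqrt (N t) - g t * (inverse (sqrt (N t)) / 2 * N' t)
        = (2 * (sqrt (N t) * sqrt (N t)) * g' t - N' t * g t) / (2 * sqrt (N t))"
      using pos[of t] by (simp add: field_simps)
    moreover have "sqrt (N t) * sqrt (N t) = N t"
      using pos[of t] by simp
    ultimately show ?thesis
      using rel[of t] by simp
  qed
  then show ?thesis
    using DERIV_isconst_all by blast
qed

lemma pruefer_transformation:
  fixes u v du dv :: "real \<Rightarrow> real"
  assumes u': "\<And>t. (u has_real_derivative du t) (at t)"
    and v': "\<And>t. (v has_real_derivative dv t) (at t)"
    and cont: "\<And>t. isCont du t" "\<And>t. isCont dv t"
    and pos: "\<And>t. u t ^ 2 + v t ^ 2 > 0"
  obtains \<phi> where "\<And>t. (\<phi> has_real_derivative (du t * v t - u t * dv t) / (u t ^ 2 + v t ^ 2)) (at t)"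
    and "\<And>t. u t = sqrt (u t ^ 2 + v t ^ 2) * sin (\<phi> t)"
    and "\<And>t. v t = sqrt (u t ^ 2 + v t ^ 2) * cos (\<phi> t)"
proof -
  define N where "N t = u t ^ 2 + v t ^ 2" for t
  define F where "F t = (du t * v t - u t * dv t) / N t" for t
  have N_pos: "N t > 0" for t
    using pos by (simp add: N_def)
  have N': "(N has_real_derivative 2 * (u t * du t + v t * dv t)) (at t)" for t
    unfolding N_def by (auto intro!: derivative_eq_intros u' v' simp: algebra_simps)
  have FN: "F t * N t = du t * v t - u t * dv t" for t
    using N_pos[of t] by (simp add: F_def)
  have "isCont F t" for t
    unfolding F_def N_def using pos[of t] cont DERIV_isCont[OF u'] DERIV_isCont[OF v']
    by (intro continuous_intros) auto
  then obtain \<Phi> where \<Phi>': "\<And>t. (\<Phi> has_real_derivative F t) (at t)"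
    using continuous_has_real_antiderivative by blast
  have "(v 0 / sqrt (N 0))\<^sup>2 + (u 0 / sqrt (N 0))\<^sup>2 = 1"
    using N_pos[of 0] by (auto simp: power_divide N_def add_divide_distrib[symmetric])
  then obtain \<theta> where \<theta>: "v 0 / sqrt (N 0) = cos \<theta>" "u 0 / sqrt (N 0) = sin \<theta>"
    by (rule sincos_total_2pi)
  define \<phi> where "\<phi> t = \<theta> + \<Phi> t - \<Phi> 0" for t
  have \<phi>': "(\<phi> has_real_derivative F t) (at t)" for t
    unfolding \<phi>_def by (auto intro!: derivative_eq_intros \<Phi>')
  \<comment> \<open>(p, q) is (v, u) rotated by \<open>-\<phi>\<close>; both components change only by the radial
     factor N'/(2N), so p/sqrt N and q/sqrt N are constant.\<close>
  define p where "p t = v t * cos (\<phi> t) + u t * sin (\<phi> t)" for t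
  define q where "q t = u t * cos (\<phi> t) - v t * sin (\<phi> t)" for t
  define p' where "p' t = dv t * cos (\<phi> t) - v t * sin (\<phi> t) * F t + du t * sin (\<phi> t) + u t * cos (\<phi> t) * F t" for t
  define q' where "q' t = du t * cos (\<phi> t) - u t * sin (\<phi> t) * F t - dv t * sin (\<phi> t) - v t * cos (\<phi> t) * F t" for t
  have p_deriv: "(p has_real_derivative p' t) (at t)" for t
    unfolding p_def p'_def by (auto intro!: derivative_eq_intros u' v' \<phi>' simp: algebra_simps)
  have q_deriv: "(q has_real_derivative q' t) (at t)" for t
    unfolding q_def q'_def by (auto intro!: derivative_eq_intros u' v' \<phi>' simp: algebra_simps)
  have "2 * N t * p' t = 2 * (u t * du t + v t * dv t) * p t" for t
  proof -
    have "N t * p' t = N t * (dv t * cos (\<phi> t) + du t * sin (\<phi> t)) + F t * N t * q t"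
      by (simp add: p'_def q_def algebra_simps)
    then show ?thesis
      unfolding FN by (simp add: N_def p_def q_def power2_eq_square algebra_simps)
  qed
  then have p_const: "p t / sqrt (N t) = p 0 / sqrt (N 0)" for t
    using DERIV_div_sqrt_constant[OF p_deriv N' N_pos] by blast
  have "2 * N t * q' t = 2 * (u t * du t + v t * dv t) * q t" for t
  proof -
    have "N t * q' t = N t * (du t * cos (\<phi> t) - dv t * sin (\<phi> t)) - F t * N t * p t"
      by (simp add: q'_def p_def algebra_simps)
    then show ?thesis
      unfolding FN by (simp add: N_def p_def q_def power2_eq_square algebra_simps)
  qed
  then have q_const: "q t / sqrt (N t) = q 0 / sqrt (N 0)" for t
    using DERIV_div_sqrt_constant[OF q_deriv N' N_pos] by blast
  have u0: "u 0 = sqrt (N 0) * sin \<theta>" and v0: "v 0 = sqrt (N 0) * cos \<theta>"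
    using \<theta> N_pos[of 0] by (simp_all add: field_simps)
  have \<phi>0: "\<phi> 0 = \<theta>"
    by (simp add: \<phi>_def)
  have "p 0 = sqrt (N 0) * ((sin \<theta>)\<^sup>2 + (cos \<theta>)\<^sup>2)" "q 0 = 0"
    unfolding p_def q_def u0 v0 \<phi>0 power2_eq_square by algebra+
  then have p0: "p 0 / sqrt (N 0) = 1" and q0: "q 0 / sqrt (N 0) = 0"
    using N_pos[of 0] by simp_all
  have pq: "p t / sqrt (N t) = 1" "q t / sqrt (N t) = 0" for t
    using trans[OF p_const p0] trans[OF q_const q0] .
  have p_eq: "p t = sqrt (N t)" for t
    using pq(1)[of t] N_pos[of t] by (simp add: divide_eq_1_iff)
  have q_eq: "q t = 0" for t
    using pq(2)[of t] N_pos[of t] by simp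
  have "u t = p t * sin (\<phi> t) + q t * cos (\<phi> t)" "v t = p t * cos (\<phi> t) - q t * sin (\<phi> t)" for t
    unfolding p_def q_def using sin_cos_squared_add[of "\<phi> t"]
    by (simp_all add: algebra_simps power2_eq_square flip: distrib_left)
  then show ?thesis
    using that[of \<phi>] \<phi>' unfolding p_eq q_eq F_def N_def by simp
qed

section \<open>Periodic solutions of the Duffing equation u'' = a u^3 + b u\<close>

locale periodic_duffing_solution =
  fixes u du :: "real \<Rightarrow> real" and a b T :: real
  assumes deriv: "\<And>t. (u has_real_derivative du t) (at t)"
    and deriv2: "\<And>t. (du has_real_derivative a * u t ^ 3 + b * u t) (at t)"
    and periodic: "periodic_with u T"
    and nonconstant: "\<exists>s t. u s \<noteq> u t"
begin

lemma continuous: "isCont u t"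
  using deriv by (rule DERIV_isCont)

lemma continuous_deriv: "isCont du t"
  using deriv2 by (rule DERIV_isCont)

lemma compact_range: "compact (range u)"
  using periodic continuous by (rule periodic_continuous_compact_range)

lemma attains_max:
  obtains t where "\<And>s. u s \<le> u t"
proof -
  obtain x where "x \<in> range u" "\<forall>y\<in>range u. y \<le> x"
    using compact_attains_sup[OF compact_range] by auto
  then show ?thesis
    using that by auto
qed

lemma attains_min:
  obtains t where "\<And>s. u t \<le> u s"
proof -
  obtain x where "x \<in> range u" "\<forall>y\<in>range u. x \<le> y"
    using compact_attains_inf[OF compact_range] by auto
  then show ?thesis
    using that by auto
qed

lemma solution_unique:
  assumes v': "\<And>t. (v has_real_derivative dv t) (at t)"
    and v'': "\<And>t. (dv has_real_derivative a * v t ^ 3 + b * v t) (at t)"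
    and range: "range v \<subseteq> range u"
    and init: "v t0 = u t0" "dv t0 = du t0"
  shows "v t = u t"
proof -
  obtain B where bound: "\<And>s. \<bar>u s\<bar> \<le> B"
    using compact_imp_bounded[OF compact_range] by (auto simp: bounded_real)
  have "u s \<in> {-B..B}" for s
    using bound[of s] by (simp add: abs_le_iff)
  then have B: "0 \<le> B" "range u \<subseteq> {-B..B}"
    using bound[of 0] abs_ge_zero[of "u 0"] by (linarith, blast)
  have "range v \<subseteq> {-B..B}"
    using range B(2) by (rule order_trans)
  then show ?thesis
    by (rule second_order_ode_unique[OF cubic_lipschitz_on[OF B(1)] v' v'' deriv deriv2 _ B(2) init])
qed

lemma no_rest_at_equilibrium:
  assumes "du t = 0"
  shows "a * u t ^ 3 + b * u t \<noteq> 0"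
proof
  assume "a * u t ^ 3 + b * u t = 0"
  then have "u t = u s" for s
    using assms by (intro solution_unique[of "\<lambda>_. u t" "\<lambda>_. 0" t s]) auto
  then show False
    using nonconstant by metis
qed

lemma phase_radius_pos:
  assumes "0 < \<omega>"
  shows "0 < (\<omega> * u t)\<^sup>2 + (du t)\<^sup>2"
  using no_rest_at_equilibrium[of t] assms by (auto simp: sum_power2_gt_zero_iff)

lemma energy_conserved:
  "(du t)\<^sup>2 - a / 2 * u t ^ 4 - b * (u t)\<^sup>2 = (du s)\<^sup>2 - a / 2 * u s ^ 4 - b * (u s)\<^sup>2"
proof -
  have "((\<lambda>t. (du t)\<^sup>2 - a / 2 * u t ^ 4 - b * (u t)\<^sup>2) has_real_derivative
      2 * du t * (a * u t ^ 3 + b * u t) - a / 2 * (4 * u t ^ 3 * du t) - b * (2 * u t * du t)) (at t)" for t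
    by (rule derivative_eq_intros deriv deriv2 refl)+ simp_all
  moreover have "2 * du t * (a * u t ^ 3 + b * u t) - a / 2 * (4 * u t ^ 3 * du t) - b * (2 * u t * du t) = 0" for t
    by (simp add: algebra_simps)
  ultimately have "((\<lambda>t. (du t)\<^sup>2 - a / 2 * u t ^ 4 - b * (u t)\<^sup>2) has_real_derivative 0) (at t)" for t
    by simp
  then show ?thesis
    using DERIV_isconst_all by blast
qed

lemma periodic_if_state_recurs:
  assumes "0 < P" "u (t0 + P) = u t0" "du (t0 + P) = du t0"
  shows "periodic_with u P"
proof -
  have "u (t + P) = u t" for t
  proof (rule solution_unique[of "\<lambda>s. u (s + P)" "\<lambda>s. du (s + P)" t0])
    show "((\<lambda>s. u (s + P)) has_real_derivative du (t + P)) (at t)" for t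
      using deriv by (simp add: DERIV_shift[symmetric])
    show "((\<lambda>s. du (s + P)) has_real_derivative a * u (t + P) ^ 3 + b * u (t + P)) (at t)" for t
      using deriv2 by (simp add: DERIV_shift[symmetric])
  qed (use assms in auto)
  then show ?thesis
    using assms(1) by (simp add: periodic_with_def)
qed

lemma pruefer_angle:
  assumes "0 < \<omega>" "\<omega>\<^sup>2 = - b"
  obtains \<phi> where
    "\<And>t. (\<phi> has_real_derivative \<omega> - a * \<omega> * u t ^ 4 / ((\<omega> * u t)\<^sup>2 + (du t)\<^sup>2)) (at t)"
    "\<And>t. \<omega> * u t = sqrt ((\<omega> * u t)\<^sup>2 + (du t)\<^sup>2) * sin (\<phi> t)"
    "\<And>t. du t = sqrt ((\<omega> * u t)\<^sup>2 + (du t)\<^sup>2) * cos (\<phi> t)"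
proof -
  have scaled: "((\<lambda>t. \<omega> * u t) has_real_derivative \<omega> * du t) (at t)" for t
    using deriv by (rule DERIV_cmult)
  have cont: "isCont (\<lambda>t. \<omega> * du t) t" "isCont (\<lambda>t. a * u t ^ 3 + b * u t) t" for t
    by (intro continuous_intros continuous_deriv continuous)+
  obtain \<phi> where \<phi>':
      "\<And>t. (\<phi> has_real_derivative (\<omega> * du t * du t - \<omega> * u t * (a * u t ^ 3 + b * u t))
          / ((\<omega> * u t)\<^sup>2 + (du t)\<^sup>2)) (at t)"
    and polar: "\<And>t. \<omega> * u t = sqrt ((\<omega> * u t)\<^sup>2 + (du t)\<^sup>2) * sin (\<phi> t)"
      "\<And>t. du t = sqrt ((\<omega> * u t)\<^sup>2 + (du t)\<^sup>2) * cos (\<phi> t)"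
    by (rule pruefer_transformation[OF scaled deriv2 cont phase_radius_pos[OF assms(1)]]) (rule that)
  have b: "b = - \<omega>\<^sup>2"
    using assms(2) by simp
  have speed: "(\<omega> * du t * du t - \<omega> * u t * (a * u t ^ 3 + b * u t)) / ((\<omega> * u t)\<^sup>2 + (du t)\<^sup>2)
      = \<omega> - a * \<omega> * u t ^ 4 / ((\<omega> * u t)\<^sup>2 + (du t)\<^sup>2)" for t
  proof -
    have "\<omega> * du t * du t - \<omega> * u t * (a * u t ^ 3 + b * u t)
        = \<omega> * ((\<omega> * u t)\<^sup>2 + (du t)\<^sup>2) - a * \<omega> * u t ^ 4"
      unfolding b by (simp add: power2_eq_square power3_eq_cube power4_eq_xxxx algebra_simps)
    moreover have "(\<omega> * u t)\<^sup>2 + (du t)\<^sup>2 \<noteq> 0"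
      using phase_radius_pos[OF assms(1), of t] by linarith
    ultimately show ?thesis
      by (simp only: diff_divide_distrib nonzero_mult_div_cancel_right not_False_eq_True)
  qed
  show ?thesis
  proof (rule that)
    show "(\<phi> has_real_derivative \<omega> - a * \<omega> * u t ^ 4 / ((\<omega> * u t)\<^sup>2 + (du t)\<^sup>2)) (at t)" for t
      using \<phi>'[of t] unfolding speed .
  qed (rule polar)+
qed

lemma softening_amplitude_bound:
  assumes "0 < a"
  shows "b < 0" and "a * (u t)\<^sup>2 < - b"
proof -
  obtain t1 where max: "\<And>s. u s \<le> u t1"
    by (rule attains_max) (rule that)
  obtain t2 where min: "\<And>s. u t2 \<le> u s"
    by (rule attains_min) (rule that)
  have "a * u t1 ^ 3 + b * u t1 < 0"
    using DERIV_second_nonpos_at_max[OF deriv deriv2 max] no_rest_at_equilibrium[of t1]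
    by fastforce
  moreover have "0 < a * u t2 ^ 3 + b * u t2"
    using DERIV_second_nonneg_at_min[OF deriv deriv2 min] no_rest_at_equilibrium[of t2]
    by fastforce
  moreover have "u t2 < u t1"
  proof -
    obtain s s' where "u s \<noteq> u s'"
      using nonconstant by blast
    then show ?thesis
      using max[of s] max[of s'] min[of s] min[of s'] by linarith
  qed
  ultimately have signs: "0 < u t1" "u t2 < 0" "a * (u t1)\<^sup>2 < - b" "a * (u t2)\<^sup>2 < - b"
    using cubic_extrema_signs[OF assms] by blast+
  have "0 < a * (u t1)\<^sup>2"
    using signs(1) assms by simp
  then show "b < 0"
    using signs(3) by linarith
  have "a * (u t)\<^sup>2 \<le> a * (u t1)\<^sup>2 \<or> a * (u t)\<^sup>2 \<le> a * (u t2)\<^sup>2"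
  proof (cases "0 \<le> u t")
    case True
    then have "(u t)\<^sup>2 \<le> (u t1)\<^sup>2"
      using max[of t] by (intro power_mono) auto
    then show ?thesis
      using assms by simp
  next
    case False
    then have "(- u t)\<^sup>2 \<le> (- u t2)\<^sup>2"
      using min[of t] by (intro power_mono) auto
    then show ?thesis
      using assms by simp
  qed
  then show "a * (u t)\<^sup>2 < - b"
    using signs(3,4) by linarith
qed

lemma softening_period_ge:
  assumes "0 < a"
  shows "2 * pi / sqrt (- b) \<le> T"
proof -
  define \<omega> where "\<omega> = sqrt (- b)"
  have \<omega>: "0 < \<omega>" "\<omega>\<^sup>2 = - b"
    using softening_amplitude_bound(1)[OF assms] by (simp_all add: \<omega>_def)
  define N where "N t = (\<omega> * u t)\<^sup>2 + (du t)\<^sup>2" for t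
  have N_pos: "0 < N t" for t
    using phase_radius_pos[OF \<omega>(1)] by (simp add: N_def)
  obtain \<phi> where \<phi>': "\<And>t. (\<phi> has_real_derivative \<omega> - a * \<omega> * u t ^ 4 / N t) (at t)"
    and polar: "\<And>t. \<omega> * u t = sqrt (N t) * sin (\<phi> t)" "\<And>t. du t = sqrt (N t) * cos (\<phi> t)"
    by (rule pruefer_angle[OF \<omega>, folded N_def]) (rule that)
  have speed_pos: "0 < \<omega> - a * \<omega> * u t ^ 4 / N t" for t
  proof -
    have "a * u t ^ 4 < N t"
    proof (cases "u t = 0")
      case False
      have "a * u t ^ 4 = a * (u t)\<^sup>2 * (u t)\<^sup>2"
        by (simp add: power2_eq_square power4_eq_xxxx mult.assoc)
      also have "\<dots> < - b * (u t)\<^sup>2"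
        using softening_amplitude_bound(2)[OF assms] False by (intro mult_strict_right_mono) auto
      also have "\<dots> \<le> N t"
        using \<omega>(2) by (simp add: N_def power_mult_distrib)
      finally show ?thesis .
    qed (use N_pos in simp)
    then show ?thesis
      using \<omega>(1) N_pos[of t] by (simp add: pos_divide_less_eq)
  qed
  have speed_le: "\<omega> - a * \<omega> * u t ^ 4 / N t \<le> \<omega>" for t
    using assms \<omega>(1) N_pos[of t] by (simp add: zero_le_even_power)
  have "0 < T"
    using periodic by (simp add: periodic_with_def)
  have "u T = u 0" "du T = du 0"
    using periodic periodic_with_deriv[OF periodic deriv] unfolding periodic_with_def by (metis add_0)+
  moreover have "N T = N 0"
    using calculation by (simp add: N_def)
  ultimately have "sqrt (N 0) * sin (\<phi> T) = sqrt (N 0) * sin (\<phi> 0)"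
    "sqrt (N 0) * cos (\<phi> T) = sqrt (N 0) * cos (\<phi> 0)"
    using polar[of T] polar[of 0] by metis+
  then have "sin (\<phi> T) = sin (\<phi> 0)" "cos (\<phi> T) = cos (\<phi> 0)"
    using N_pos[of 0] by simp_all
  moreover have "\<phi> 0 < \<phi> T"
  proof (rule DERIV_pos_imp_increasing[OF \<open>0 < T\<close>])
    show "\<exists>y. (\<phi> has_real_derivative y) (at x) \<and> 0 < y" for x
      using \<phi>'[of x] speed_pos[of x] by blast
  qed
  ultimately have "\<phi> 0 + 2 * pi \<le> \<phi> T"
    by (rule sin_cos_eq_less_imp_ge_2pi)
  moreover have "\<omega> * 0 - \<phi> 0 \<le> \<omega> * T - \<phi> T"
  proof (rule DERIV_nonneg_imp_nondecreasing[where f = "\<lambda>s. \<omega> * s - \<phi> s"])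
    fix x
    have "((\<lambda>s. \<omega> * s - \<phi> s) has_real_derivative \<omega> * 1 - (\<omega> - a * \<omega> * u x ^ 4 / N x)) (at x)"
      by (intro DERIV_diff DERIV_cmult DERIV_ident \<phi>')
    then show "\<exists>y. ((\<lambda>s. \<omega> * s - \<phi> s) has_real_derivative y) (at x) \<and> 0 \<le> y"
      using speed_le[of x] by force
  qed (use \<open>0 < T\<close> in simp)
  ultimately have "2 * pi \<le> \<omega> * T"
    by simp
  then show ?thesis
    using \<omega>(1) by (simp add: \<omega>_def[symmetric] pos_divide_le_eq mult.commute)
qed

lemma state_determined_by_phase_direction:
  assumes "a \<le> 0" "0 < \<omega>" "\<omega>\<^sup>2 = - b" "x\<^sup>2 + y\<^sup>2 = 1" "0 \<le> r" "0 \<le> r'"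
    and s: "\<omega> * u s = r * x" "du s = r * y" and t: "\<omega> * u t = r' * x" "du t = r' * y"
  shows "u s = u t" "du s = du t"
proof -
  have energy: "(du t)\<^sup>2 - a / 2 * u t ^ 4 - b * (u t)\<^sup>2 = \<rho>\<^sup>2 + (- a / 2 * (x / \<omega>) ^ 4) * \<rho> ^ 4"
    if "\<omega> * u t = \<rho> * x" "du t = \<rho> * y" for t \<rho>
  proof -
    have "(du t)\<^sup>2 - b * (u t)\<^sup>2 = (\<rho> * y)\<^sup>2 + (\<omega> * u t)\<^sup>2"
      using that(2) \<open>\<omega>\<^sup>2 = - b\<close> by (simp add: power_mult_distrib)
    also have "\<dots> = \<rho>\<^sup>2"
      using that(1) \<open>x\<^sup>2 + y\<^sup>2 = 1\<close> by (simp add: power_mult_distrib flip: distrib_left)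
    finally have "(du t)\<^sup>2 - b * (u t)\<^sup>2 = \<rho>\<^sup>2" .
    moreover have "u t ^ 4 = (x / \<omega>) ^ 4 * \<rho> ^ 4"
    proof -
      have "u t = \<rho> * x / \<omega>"
        using that(1) \<open>0 < \<omega>\<close> by (simp add: field_simps)
      then show ?thesis
        by (simp add: power_mult_distrib power_divide)
    qed
    ultimately show ?thesis
      by (simp add: algebra_simps)
  qed
  have "r = r'"
  proof (rule power2_add_power4_inj)
    show "0 \<le> - a / 2 * (x / \<omega>) ^ 4"
      using \<open>a \<le> 0\<close> zero_le_even_power[of 4 "x / \<omega>"] by (simp add: mult_nonpos_nonneg)
    show "r\<^sup>2 + - a / 2 * (x / \<omega>) ^ 4 * r ^ 4 = r'\<^sup>2 + - a / 2 * (x / \<omega>) ^ 4 * r' ^ 4"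
      using energy[OF s] energy[OF t] energy_conserved[of s t] by simp
  qed (use assms in auto)
  then have "\<omega> * u s = \<omega> * u t" "du s = du t"
    using s t by simp_all
  then show "u s = u t" "du s = du t"
    using \<open>0 < \<omega>\<close> by simp_all
qed

lemma hardening_short_period:
  assumes "a < 0" "b < 0"
  obtains P where "0 < P" "P < 2 * pi / sqrt (- b)" "periodic_with u P"
proof -
  define \<omega> where "\<omega> = sqrt (- b)"
  have \<omega>: "0 < \<omega>" "\<omega>\<^sup>2 = - b"
    using assms(2) by (simp_all add: \<omega>_def)
  define N where "N t = (\<omega> * u t)\<^sup>2 + (du t)\<^sup>2" for t
  have N_pos: "0 < N t" for t
    using phase_radius_pos[OF \<omega>(1)] by (simp add: N_def)
  obtain \<phi> where \<phi>': "\<And>t. (\<phi> has_real_derivative \<omega> - a * \<omega> * u t ^ 4 / N t) (at t)"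
    and polar: "\<And>t. \<omega> * u t = sqrt (N t) * sin (\<phi> t)" "\<And>t. du t = sqrt (N t) * cos (\<phi> t)"
    by (rule pruefer_angle[OF \<omega>, folded N_def]) (rule that)
  have speed_ge: "\<omega> \<le> \<omega> - a * \<omega> * u t ^ 4 / N t" for t
    using assms(1) \<omega>(1) N_pos[of t] by (simp add: divide_nonpos_pos mult_nonpos_nonneg zero_le_even_power)
  obtain t0 where "u t0 \<noteq> 0"
    using nonconstant by metis
  then have speed_gt: "\<omega> < \<omega> - a * \<omega> * u t0 ^ 4 / N t0"
    using assms(1) \<omega>(1) N_pos[of t0] by (simp add: divide_neg_pos mult_neg_pos)
  have "0 < 2 * pi"
    by simp
  obtain p where p: "t0 < p" "p < t0 + 2 * pi / \<omega>" "\<phi> p = \<phi> t0 + 2 * pi"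
    by (rule reaches_level_before_linear_time[OF \<phi>' speed_ge speed_gt \<omega>(1) \<open>0 < 2 * pi\<close>]) (rule that)
  have p_polar: "\<omega> * u p = sqrt (N p) * sin (\<phi> t0)" "du p = sqrt (N p) * cos (\<phi> t0)"
    using polar[of p] p(3) by simp_all
  have radii: "0 \<le> sqrt (N p)" "0 \<le> sqrt (N t0)"
    using N_pos by (simp_all add: less_imp_le)
  have "u p = u t0" "du p = du t0"
    using state_determined_by_phase_direction[OF less_imp_le[OF assms(1)] \<omega> sin_cos_squared_add
        radii p_polar polar[of t0]] .
  then have "periodic_with u (p - t0)"
    using periodic_if_state_recurs[of "p - t0" t0] p(1) by simp
  then show ?thesis
    using that[of "p - t0"] p(1,2) by (simp add: \<omega>_def)
qed

end

theorem proposition3p1: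
  fixes x y vx vy :: "real \<Rightarrow> real"
    and \<xi> \<eta> d\<xi> d\<eta> tt :: "real \<Rightarrow> real"
    and H c T\<^sub>\<xi> T\<^sub>\<eta> :: real
  assumes stark:
    "\<And>t. (x t, y t) \<noteq> (0, 0) \<Longrightarrow>
       (x has_real_derivative vx t) (at t) \<and> (y has_real_derivative vy t) (at t) \<and>
       (vx has_real_derivative (- x t / (sqrt (x t ^ 2 + y t ^ 2)) ^ 3 + 1)) (at t) \<and>
       (vy has_real_derivative (- y t / (sqrt (x t ^ 2 + y t ^ 2)) ^ 3)) (at t)"
    and energy: "\<And>t. (x t, y t) \<noteq> (0, 0) \<Longrightarrow> stark_energy (x t) (y t) (vx t) (vy t) = H"
    and const: "\<And>t. (x t, y t) \<noteq> (0, 0) \<Longrightarrow> stark_const (x t) (y t) (vx t) (vy t) = c"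
    and time: "\<And>\<tau>. (tt has_real_derivative (\<xi> \<tau> ^ 2 + \<eta> \<tau> ^ 2)) (at \<tau>)"
    and par_xi: "\<And>\<tau>. \<xi> \<tau> ^ 2 = sqrt (x (tt \<tau>) ^ 2 + y (tt \<tau>) ^ 2) + x (tt \<tau>)"
    and par_eta: "\<And>\<tau>. \<eta> \<tau> ^ 2 = sqrt (x (tt \<tau>) ^ 2 + y (tt \<tau>) ^ 2) - x (tt \<tau>)"
    and par_y: "\<And>\<tau>. \<xi> \<tau> * \<eta> \<tau> = y (tt \<tau>)"
    and xi_d1: "\<And>\<tau>. (\<xi> has_real_derivative d\<xi> \<tau>) (at \<tau>)"
    and xi_d2: "\<And>\<tau>. (d\<xi> has_real_derivative (2 * \<xi> \<tau> ^ 3 + 2 * H * \<xi> \<tau>)) (at \<tau>)"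
    and xi_int: "\<And>\<tau>. d\<xi> \<tau> ^ 2 = \<xi> \<tau> ^ 4 + 2 * H * \<xi> \<tau> ^ 2 + 2 * (c + 1)"
    and eta_d1: "\<And>\<tau>. (\<eta> has_real_derivative d\<eta> \<tau>) (at \<tau>)"
    and eta_d2: "\<And>\<tau>. (d\<eta> has_real_derivative (- 2 * \<eta> \<tau> ^ 3 + 2 * H * \<eta> \<tau>)) (at \<tau>)"
    and eta_int: "\<And>\<tau>. d\<eta> \<tau> ^ 2 = - (\<eta> \<tau> ^ 4) + 2 * H * \<eta> \<tau> ^ 2 - 2 * (c - 1)"
    and per_xi: "minimal_period \<xi> T\<^sub>\<xi>"
    and per_eta: "minimal_period \<eta> T\<^sub>\<eta>"
  shows "T\<^sub>\<xi> > T\<^sub>\<eta>"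
proof -
  interpret \<xi>: periodic_duffing_solution \<xi> d\<xi> 2 "2 * H" T\<^sub>\<xi>
    using xi_d1 xi_d2 per_xi minimal_period_nonconstant[OF per_xi]
    by unfold_locales (auto simp: minimal_period_def)
  interpret \<eta>: periodic_duffing_solution \<eta> d\<eta> "- 2" "2 * H" T\<^sub>\<eta>
    using eta_d1 eta_d2 per_eta minimal_period_nonconstant[OF per_eta]
    by unfold_locales (auto simp: minimal_period_def)
  have H: "2 * H < 0"
    using \<xi>.softening_amplitude_bound(1) by simp
  obtain P where P: "0 < P" "P < 2 * pi / sqrt (- (2 * H))" "periodic_with \<eta> P"
    by (rule \<eta>.hardening_short_period[OF _ H]) (simp_all add: that)
  have "T\<^sub>\<eta> \<le> P"
    using per_eta P(1,3) unfolding minimal_period_def by (meson not_less)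
  also have "\<dots> < 2 * pi / sqrt (- (2 * H))"
    by (rule P(2))
  also have "\<dots> \<le> T\<^sub>\<xi>"
    using \<xi>.softening_period_ge by simp
  finally show ?thesis .
qed

end
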